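(* Let $\Omega\subset\mathbb R^n$ be a domain and let $u\in LSC(\Omega)\cap L^1(\omega_s)$ be a viscosity supersolution of $-\mathcal M^-_{\mathcal L}u\ge0$ in $\Omega$ with $u\ge0$ in $\mathbb R^n$. Then either $u>0$ in $\Omega$ or $u\equiv0$ in $\Omega$.
   Context: Fix $n\ge1$, $s\in(\tfrac12,1)$, $0<\lambda\le\Lambda$, $c^+>0$. $\omega_s(dy)=\min\{1,|y|^{-(n+2s)}\}dy$; $L^1(\omega_s)$ as usual. $\delta(u,x,y)=u(x+y)+u(x-y)-2u(x)$, $S^-(t)=\lambda t_+-\Lambda t_-$, $\mathcal M^-_{\mathcal K}u(x)=\int_{\mathbb R^n}S^-(\delta(u,x,y))|y|^{-(n+2s)}dy$, and $\mathcal M^-_{\mathcal L}u=\mathcal M^-_{\mathcal K}u-c^+|\nabla u|$. Viscosity supersolution: at each $x_0\in\Omega$, for every $C^2$ function $\varphi$ on a neighborhood $V\Subset\Omega$ of $x_0$ touching $u$ from below at $x_0$, the function equal to $\varphi$ in $V$ and $u$ outside $V$ satisfies the inequality at $x_0$. *)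

theory Defs
  imports "HOL-Analysis.Analysis"
begin

definition delta2 :: "('a::euclidean_space \<Rightarrow> real) \<Rightarrow> 'a \<Rightarrow> 'a \<Rightarrow> real" where
  "delta2 u x y = u (x + y) + u (x - y) - 2 * u x"

definition Sminus :: "real \<Rightarrow> real \<Rightarrow> real \<Rightarrow> real" where
  "Sminus lam Lam t = lam * max t 0 - Lam * max (- t) 0"

definition kern :: "real \<Rightarrow> 'a::euclidean_space \<Rightarrow> real" where
  "kern s y = norm y powr (- (real DIM('a) + 2 * s))"

definition omega_w :: "real \<Rightarrow> 'a::euclidean_space \<Rightarrow> real" where
  "omega_w s y = min 1 (kern s y)"

definition L1_omega :: "real \<Rightarrow> ('a::euclidean_space \<Rightarrow> real) \<Rightarrow> bool" where
  "L1_omega s u \<longleftrightarrow> u \<in> borel_measurable lebesgue \<and>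
     integrable lebesgue (\<lambda>y. \<bar>u y\<bar> * omega_w s y)"

definition MminusK :: "real \<Rightarrow> real \<Rightarrow> real \<Rightarrow> ('a::euclidean_space \<Rightarrow> real) \<Rightarrow> 'a \<Rightarrow> real" where
  "MminusK s lam Lam u x =
     integral\<^sup>L lebesgue (\<lambda>y. Sminus lam Lam (delta2 u x y) * kern s y)"

definition lsc_on :: "'a::topological_space set \<Rightarrow> ('a \<Rightarrow> real) \<Rightarrow> bool" where
  "lsc_on S u \<longleftrightarrow> (\<forall>x\<in>S. \<forall>t. t < u x \<longrightarrow> (\<forall>\<^sub>F y in at x within S. t < u y))"

definition C2_with :: "'a::euclidean_space set \<Rightarrow> ('a \<Rightarrow> real) \<Rightarrow> ('a \<Rightarrow> ('a \<Rightarrow>\<^sub>L real))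
     \<Rightarrow> ('a \<Rightarrow> ('a \<Rightarrow>\<^sub>L ('a \<Rightarrow>\<^sub>L real))) \<Rightarrow> bool" where
  "C2_with V \<phi> D D2 \<longleftrightarrow>
     (\<forall>x\<in>V. (\<phi> has_derivative blinfun_apply (D x)) (at x)) \<and>
     (\<forall>x\<in>V. (D has_derivative blinfun_apply (D2 x)) (at x)) \<and>
     continuous_on V D2"

text \<open>Viscosity supersolution of  - M^-_L u >= 0  in Omega, where
  M^-_L u = M^-_K u - c |grad u|.  The test function is phi on V and u outside V;
  |grad phi(x0)| is the operator norm of D x0 (= Euclidean norm of the gradient).\<close>
definition visc_super :: "real \<Rightarrow> real \<Rightarrow> real \<Rightarrow> real \<Rightarrow> 'a::euclidean_space set \<Rightarrow> ('a \<Rightarrow> real) \<Rightarrow> bool" where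
  "visc_super s lam Lam c \<Omega> u \<longleftrightarrow>
    (\<forall>x0\<in>\<Omega>. \<forall>V \<phi> D D2.
       open V \<and> x0 \<in> V \<and> compact (closure V) \<and> closure V \<subseteq> \<Omega> \<and>
       C2_with V \<phi> D D2 \<and> \<phi> x0 = u x0 \<and> (\<forall>x\<in>V. \<phi> x \<le> u x) \<longrightarrow>
       - (MminusK s lam Lam (\<lambda>x. if x \<in> V then \<phi> x else u x) x0 - c * norm (D x0)) \<ge> 0)"

end

theory Submission
  imports Defs
begin

text \<open>
  Suppose \<open>u(x\<^sub>0) = 0\<close> at some \<open>x\<^sub>0 \<in> \<Omega>\<close>. Since \<open>u \<ge> 0\<close>, the zero function touches \<open>u\<close>
  from below on a small ball \<open>B\<close> around \<open>x\<^sub>0\<close>, so the supersolution property gives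
  \<open>M\<^sup>-\<^sub>K w(x\<^sub>0) \<le> 0\<close> for \<open>w\<close> equal to \<open>0\<close> on \<open>B\<close> and to \<open>u\<close> outside. As \<open>w \<ge> 0 = w(x\<^sub>0)\<close>,
  all second differences are nonnegative and
  \<open>M\<^sup>-\<^sub>K w(x\<^sub>0) = \<lambda> \<integral> (w(x\<^sub>0+y) + w(x\<^sub>0-y)) |y|^(-n-2s) dy\<close>,
  an integral that is finite because \<open>w\<close> vanishes near \<open>x\<^sub>0\<close> and \<open>u \<in> L\<^sup>1(\<omega>\<^sub>s)\<close>
  (finiteness matters: the Bochner integral of a non-integrable function is \<open>0\<close>).
  If \<open>u\<close> were positive somewhere in \<open>\<Omega>\<close>, lower semicontinuity would make it positive on a
  whole ball, and the integral would be positive. The nonlocal operator sees that ball however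
  far from \<open>x\<^sub>0\<close> it lies.
\<close>

lemma integrable_lebesgue_affine:
  fixes f :: "'a::euclidean_space \<Rightarrow> real"
  assumes f: "integrable lebesgue f" and c: "c \<noteq> 0"
  shows "integrable lebesgue (\<lambda>x. f (t + c *\<^sub>R x))"
proof -
  define T where "T = (\<lambda>x::'a. t + c *\<^sub>R x)"
  have T_eq: "(\<lambda>x. t + (\<Sum>j\<in>Basis. (c * (x \<bullet> j)) *\<^sub>R j)) = T"
    unfolding T_def scaleR_scaleR[symmetric] scaleR_sum_right[symmetric]
    by (simp add: euclidean_representation)
  have T: "T \<in> lebesgue \<rightarrow>\<^sub>M lebesgue"
    using lebesgue_affine_measurable[of "\<lambda>_. c" t] c unfolding T_eq by simp
  have leb: "lebesgue = density (distr lebesgue lebesgue T) (\<lambda>_. ennreal (\<bar>c\<bar> ^ DIM('a)))"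
    using lebesgue_affine_euclidean[of "\<lambda>_. c" t] c unfolding T_eq by simp
  have fm: "f \<in> borel_measurable (distr lebesgue lebesgue T)"
    using f by (simp add: borel_measurable_integrable)
  have "integrable (density (distr lebesgue lebesgue T) (\<lambda>_. ennreal (\<bar>c\<bar> ^ DIM('a)))) f"
    using f leb by simp
  then have "integrable (distr lebesgue lebesgue T) (\<lambda>x. \<bar>c\<bar> ^ DIM('a) *\<^sub>R f x)"
    using integrable_density[OF fm, of "\<lambda>_. \<bar>c\<bar> ^ DIM('a)"] by simp
  then have "integrable (distr lebesgue lebesgue T) f"
    using c by simp
  then show ?thesis
    using integrable_distr_eq[OF T borel_measurable_integrable[OF f]] by (simp add: T_def)
qed

lemma integral_pos_if_pos_on_ball:
  fixes f :: "'a::euclidean_space \<Rightarrow> real"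
  assumes f: "integrable lebesgue f" and nonneg: "\<And>y. 0 \<le> f y"
    and pos: "\<And>y. y \<in> ball p e \<Longrightarrow> 0 < f y" and e: "0 < e"
  shows "0 < (\<integral>y. f y \<partial>lebesgue)"
proof (rule ccontr)
  assume "\<not> 0 < (\<integral>y. f y \<partial>lebesgue)"
  moreover have "0 \<le> (\<integral>y. f y \<partial>lebesgue)"
    by (rule integral_nonneg_AE) (simp add: nonneg)
  ultimately have "(\<integral>y. f y \<partial>lebesgue) = 0"
    by simp
  then have "AE y in lebesgue. f y = 0"
    using integral_nonneg_eq_0_iff_AE[OF f] nonneg by auto
  then obtain N where N: "{y. f y \<noteq> 0} \<subseteq> N" "emeasure lebesgue N = 0" "N \<in> sets lebesgue"
    by (auto elim: AE_E)
  have "ball p e \<subseteq> N"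
    using N(1) pos by force
  then have "emeasure lebesgue (ball p e) = 0"
    using N(2,3) by (metis emeasure_eq_0)
  moreover have "0 < emeasure lebesgue (ball p e)"
    using e by (simp add: emeasure_ball)
  ultimately show False by simp
qed

lemma kern_le_omega_w:
  fixes y z :: "'a::euclidean_space" and s r a :: real
  assumes s: "0 < s" and r: "0 < r" "r \<le> norm y" and a: "0 \<le> a"
    and z: "z \<noteq> 0" "norm z \<le> a + norm y"
  shows "kern s y \<le> max 1 (r powr - (DIM('a) + 2 * s)) * (1 + a / r) powr (DIM('a) + 2 * s)
                      * omega_w s z"
proof -
  define p where "p = real DIM('a) + 2 * s"
  define b where "b = 1 + a / r"
  define M where "M = max 1 (r powr - p)"
  have p: "0 < p" using s by (simp add: p_def add_pos_pos)
  have b: "1 \<le> b" using a r by (simp add: b_def)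
  have bp: "1 \<le> b powr p" using b p by (simp add: ge_one_powr_ge_zero)
  have y: "0 < norm y" using r by linarith
  have ky_r: "kern s y \<le> r powr - p"
    unfolding kern_def p_def[symmetric] using r p by (intro powr_mono2') auto
  have "a * 1 \<le> a * (norm y / r)"
    using a r by (intro mult_left_mono) auto
  then have "norm z \<le> b * norm y"
    using z(2) r by (simp add: b_def algebra_simps)
  then have "(b * norm y) powr - p \<le> kern s z"
    unfolding kern_def p_def[symmetric] using z(1) p by (intro powr_mono2') auto
  then have "b powr - p * kern s y \<le> kern s z"
    using b y by (simp add: kern_def p_def[symmetric] powr_mult)
  then have ky_z: "kern s y \<le> b powr p * kern s z"
    using b bp by (simp add: powr_minus divide_simps mult.commute)
  have "kern s y \<le> M * b powr p * min 1 (kern s z)"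
  proof (cases "kern s z \<le> 1")
    case True
    have "1 * (b powr p * kern s z) \<le> M * (b powr p * kern s z)"
      by (rule mult_right_mono) (auto simp: M_def kern_def)
    then show ?thesis using True ky_z by simp
  next
    case False
    have "r powr - p \<le> M * 1"
      by (simp add: M_def)
    also have "\<dots> \<le> M * b powr p"
      using bp by (intro mult_left_mono) (auto simp: M_def)
    finally show ?thesis using False ky_r by simp
  qed
  then show ?thesis
    by (simp add: omega_w_def M_def b_def p_def)
qed

lemma kern_measurable [measurable]: "kern s \<in> borel_measurable lebesgue"
  unfolding kern_def[abs_def] by (intro measurable_completion) simp

lemma integrable_kern_tail:
  fixes u v :: "'a::euclidean_space \<Rightarrow> real" and s r m :: real
  assumes s: "0 < s" and u: "L1_omega s u" and r: "0 < r" and m: "\<bar>m\<bar> = 1"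
    and v: "v \<in> borel_measurable lebesgue" "\<And>z. \<bar>v z\<bar> \<le> \<bar>u z\<bar>"
      "\<And>z. z \<in> ball x0 r \<Longrightarrow> v z = 0"
  shows "integrable lebesgue (\<lambda>y. v (x0 + m *\<^sub>R y) * kern s y)"
proof -
  define K where "K = max 1 (r powr - (DIM('a) + 2 * s)) * (1 + norm x0 / r) powr (DIM('a) + 2 * s)"
  define g where "g z = K * (\<bar>u z\<bar> * omega_w s z)" for z
  have "integrable lebesgue g"
    using u unfolding L1_omega_def g_def by (intro integrable_mult_right) auto
  then have G: "integrable lebesgue (\<lambda>y. g (x0 + m *\<^sub>R y))"
    using m by (intro integrable_lebesgue_affine) auto
  have vm: "(\<lambda>y. v (x0 + m *\<^sub>R y)) \<in> borel_measurable lebesgue"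
    using m v(1) by (intro borel_measurable_affine) auto
  \<comment> \<open>At \<open>x0 + m y = 0\<close> the bound fails: \<open>omega_w s 0 = 0\<close> because \<open>0 powr a = 0\<close>.\<close>
  have "AE y in lebesgue. y \<noteq> - m *\<^sub>R x0"
    by (rule AE_completion[OF AE_lborel_singleton])
  then have bound: "AE y in lebesgue. norm (v (x0 + m *\<^sub>R y) * kern s y) \<le> norm (g (x0 + m *\<^sub>R y))"
  proof eventually_elim
    case (elim y)
    show ?case
    proof (cases "norm y < r")
      case True
      then have "v (x0 + m *\<^sub>R y) = 0"
        using m by (intro v(3)) (simp add: dist_norm)
      then show ?thesis by simp
    next
      case False
      have "m = 1 \<or> m = -1"
        using m by linarith
      then have "x0 + m *\<^sub>R y \<noteq> 0"
        using elim by (elim disjE) (auto simp: add_eq_0_iff)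
      moreover have "norm (x0 + m *\<^sub>R y) \<le> norm x0 + norm y"
        using m norm_triangle_ineq[of x0 "m *\<^sub>R y"] by simp
      ultimately have "kern s y \<le> K * omega_w s (x0 + m *\<^sub>R y)"
        unfolding K_def using False s r by (intro kern_le_omega_w) auto
      then have "\<bar>v (x0 + m *\<^sub>R y)\<bar> * kern s y \<le> \<bar>u (x0 + m *\<^sub>R y)\<bar> * (K * omega_w s (x0 + m *\<^sub>R y))"
        using v(2) by (intro mult_mono) (auto simp: kern_def)
      moreover have "0 \<le> K" "0 \<le> omega_w s (x0 + m *\<^sub>R y)"
        by (simp_all add: K_def omega_w_def kern_def)
      ultimately show ?thesis
        by (simp add: g_def abs_mult kern_def mult.left_commute)
    qed
  qed
  have "(\<lambda>y. v (x0 + m *\<^sub>R y) * kern s y) \<in> borel_measurable lebesgue"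
    using vm by measurable
  then show ?thesis
    by (rule Bochner_Integration.integrable_bound[OF G _ bound])
qed

lemma Sminus_delta2_at_zero:
  assumes "0 \<le> lam" "w x = 0" "0 \<le> w (x + y)" "0 \<le> w (x - y)"
  shows "Sminus lam Lam (delta2 w x y) = lam * w (x + y) + lam * w (x - y)"
  using assms by (simp add: Sminus_def delta2_def distrib_left)

lemma MminusK_cutoff_pos:
  fixes u :: "'a::euclidean_space \<Rightarrow> real"
  assumes s: "0 < s" and lam: "0 < lam" and u: "L1_omega s u" "\<And>z. 0 \<le> u z"
    and r: "0 < r" and e: "0 < e" and disj: "ball p e \<inter> ball x0 r = {}"
    and pos: "\<And>z. z \<in> ball p e \<Longrightarrow> 0 < u z"
  shows "0 < MminusK s lam Lam (\<lambda>z. if z \<in> ball x0 r then 0 else u z) x0"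
proof -
  define w where "w z = (if z \<in> ball x0 r then 0 else u z)" for z
  have w_nonneg: "0 \<le> w z" for z
    using u(2) by (simp add: w_def)
  have "u \<in> borel_measurable lebesgue"
    using u(1) by (simp add: L1_omega_def)
  moreover have "ball x0 r \<in> sets lebesgue"
    by simp
  ultimately have w_meas: "w \<in> borel_measurable lebesgue"
    unfolding w_def by measurable
  have tail: "integrable lebesgue (\<lambda>y. w (x0 + m *\<^sub>R y) * kern s y)" if "\<bar>m\<bar> = 1" for m
    using s u(1) r that w_meas by (rule integrable_kern_tail) (auto simp: w_def)
  define F where "F y = lam * (w (x0 + y) * kern s y) + lam * (w (x0 - y) * kern s y)" for y
  have F_eq: "Sminus lam Lam (delta2 w x0 y) * kern s y = F y" for y
    using lam w_nonneg r by (subst Sminus_delta2_at_zero) (auto simp: F_def algebra_simps w_def[of x0])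
  have "integrable lebesgue F"
    using tail[of 1] tail[of "-1"] unfolding F_def by simp
  moreover have "0 \<le> F y" for y
    using lam w_nonneg by (simp add: F_def kern_def)
  moreover have "0 < F y" if y: "y \<in> ball (p - x0) e" for y
  proof -
    have "x0 + y \<in> ball p e"
      using y by (simp add: dist_norm algebra_simps)
    then have "0 < w (x0 + y)" "y \<noteq> 0"
      using disj pos r by (auto simp: w_def)
    then show ?thesis
      using lam w_nonneg[of "x0 - y"] by (simp add: F_def kern_def add_pos_nonneg)
  qed
  ultimately have "0 < (\<integral>y. F y \<partial>lebesgue)"
    using e by (rule integral_pos_if_pos_on_ball)
  moreover have "(\<lambda>z. if z \<in> ball x0 r then 0 else u z) = w"
    by (simp add: w_def fun_eq_iff)
  ultimately show ?thesis
    by (simp add: MminusK_def F_eq)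
qed

lemma lsc_on_pos_ball:
  fixes u :: "'a::metric_space \<Rightarrow> real"
  assumes "lsc_on S u" "open S" "x \<in> S" "0 < u x"
  obtains e where "0 < e" "\<And>z. z \<in> ball x e \<Longrightarrow> 0 < u z"
proof -
  have "\<forall>\<^sub>F z in at x within S. 0 < u z"
    using assms(1,3,4) unfolding lsc_on_def by blast
  then have "\<forall>\<^sub>F z in at x. 0 < u z"
    unfolding at_within_open[OF assms(3,2)] .
  then obtain e where e: "0 < e" "\<And>z. z \<noteq> x \<Longrightarrow> dist z x < e \<Longrightarrow> 0 < u z"
    by (auto simp: eventually_at)
  have "0 < u z" if "z \<in> ball x e" for z
    using that e(2)[of z] assms(4) by (cases "z = x") (auto simp: dist_commute)
  with e(1) show ?thesis
    by (rule that)
qed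

lemma visc_super_MminusK_cutoff_nonpos:
  fixes u :: "'a::euclidean_space \<Rightarrow> real"
  assumes visc: "visc_super s lam Lam c \<Omega> u" and r: "0 < r" "cball x0 r \<subseteq> \<Omega>"
    and u: "u x0 = 0" "\<And>z. z \<in> ball x0 r \<Longrightarrow> 0 \<le> u z"
  shows "MminusK s lam Lam (\<lambda>z. if z \<in> ball x0 r then 0 else u z) x0 \<le> 0"
proof -
  have "x0 \<in> \<Omega>"
    using r by auto
  moreover have "C2_with (ball x0 r) (\<lambda>_. 0) (\<lambda>_. 0) (\<lambda>_. 0)"
    by (simp add: C2_with_def zero_blinfun.rep_eq)
  moreover have "closure (ball x0 r) = cball x0 r"
    using r by simp
  ultimately show ?thesis
    using visc[unfolded visc_super_def, rule_format, of x0 "ball x0 r" "\<lambda>_. 0" "\<lambda>_. 0" "\<lambda>_. 0"] r u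
    by auto
qed

theorem theorem2p8:
  fixes s lam Lam c :: real and \<Omega> :: "'a::euclidean_space set" and u :: "'a \<Rightarrow> real"
  assumes "1/2 < s" "s < 1" "0 < lam" "lam \<le> Lam" "0 < c"
    and "open \<Omega>" "connected \<Omega>"
    and "lsc_on \<Omega> u" "L1_omega s u"
    and "visc_super s lam Lam c \<Omega> u"
    and "\<forall>x. 0 \<le> u x"
  shows "(\<forall>x\<in>\<Omega>. 0 < u x) \<or> (\<forall>x\<in>\<Omega>. u x = 0)"
proof (rule ccontr)
  assume "\<not> ?thesis"
  then obtain x0 x where x0: "x0 \<in> \<Omega>" "u x0 = 0" and x: "x \<in> \<Omega>" "0 < u x"
    using assms(11) by (metis less_eq_real_def)
  define d where "d = dist x0 x / 2"
  obtain r0 where r0: "0 < r0" "cball x0 r0 \<subseteq> \<Omega>"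
    using open_contains_cball assms(6) x0(1) by blast
  obtain e0 where e0: "0 < e0" "\<And>z. z \<in> ball x e0 \<Longrightarrow> 0 < u z"
    using lsc_on_pos_ball assms(6,8) x by blast
  define r e where "r = min r0 d" and "e = min e0 d"
  have "0 < d"
    using x0 x by (auto simp: d_def)
  then have "0 < r" "0 < e"
    using r0 e0 by (auto simp: r_def e_def)
  have "ball x e \<inter> ball x0 r = {}"
  proof (intro equals0I)
    fix z assume "z \<in> ball x e \<inter> ball x0 r"
    then have "dist x0 z + dist z x < 2 * d"
      by (auto simp: r_def e_def dist_commute)
    with dist_triangle[of x0 x z] show False
      by (simp add: d_def)
  qed
  have "MminusK s lam Lam (\<lambda>z. if z \<in> ball x0 r then 0 else u z) x0 \<le> 0"
    using assms(10) \<open>0 < r\<close> r0(2) x0(2) assms(11)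
    by (intro visc_super_MminusK_cutoff_nonpos) (auto simp: r_def)
  moreover have "0 < MminusK s lam Lam (\<lambda>z. if z \<in> ball x0 r then 0 else u z) x0"
    using assms(1,3,9,11) \<open>0 < r\<close> \<open>0 < e\<close> \<open>ball x e \<inter> ball x0 r = {}\<close> e0(2)
    by (intro MminusK_cutoff_pos) (auto simp: e_def)
  ultimately show False
    by simp
qed

end
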